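(* There is $\varepsilon_0>0$ such that the following holds. Let $\Sigma$ be a $C^2$-smooth curve in $\mathbb{T}^2$. There is $C_\Sigma$ such that for every $0<\varepsilon\le\varepsilon_0$ and every $E=\lambda^2\in\mathbb{Z}_{>0}$ satisfying $$\min_{x\ne y\in\mathbb{Z}^2,\ |x|=\lambda=|y|}|x-y|>\lambda^{1-\varepsilon},$$ every eigenfunction $\varphi_\lambda$ with eigenvalue $E$ satisfies $\|\varphi_\lambda\|_{L^2(\Sigma)}\le C_\Sigma\|\varphi_\lambda\|_{L^2(\mathbb{T}^2)}$.
   Context: $\mathbb{T}^2=\mathbb{R}^2/\mathbb{Z}^2$; $\Sigma$ is a compact $C^2$ curve with arc-length measure. An eigenfunction with eigenvalue $E$ is $\varphi(x)=\sum_{\xi\in\mathbb{Z}^2,|\xi|^2=E}a_\xi e^{2\pi i x\cdot\xi}$. *)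

theory Defs
  imports "HOL-Analysis.Analysis"
begin

text \<open>Points of the torus are represented by points of the plane (functions below are
  Z^2-periodic). Lattice points are pairs of integers.\<close>

definition dotZ :: "real \<times> real \<Rightarrow> int \<times> int \<Rightarrow> real" where
  "dotZ x \<xi> = fst x * of_int (fst \<xi>) + snd x * of_int (snd \<xi>)"

definition normsqZ :: "int \<times> int \<Rightarrow> int" where
  "normsqZ \<xi> = (fst \<xi>)\<^sup>2 + (snd \<xi>)\<^sup>2"

definition latt_circle :: "nat \<Rightarrow> (int \<times> int) set" where
  "latt_circle E = {\<xi>. normsqZ \<xi> = int E}"

definition eigfun :: "nat \<Rightarrow> (int \<times> int \<Rightarrow> complex) \<Rightarrow> real \<times> real \<Rightarrow> complex" where
  "eigfun E a x = (\<Sum>\<xi>\<in>latt_circle E. a \<xi> * exp (2 * of_real pi * \<i> * of_real (dotZ x \<xi>)))"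

text \<open>A compact regular C^2 curve, parametrised on [0,1] (projected to the torus).\<close>
definition C2_curve :: "(real \<Rightarrow> real \<times> real) \<Rightarrow> bool" where
  "C2_curve \<gamma> \<longleftrightarrow> (\<exists>\<gamma>' \<gamma>''.
     (\<forall>t\<in>{0..1}. (\<gamma> has_vector_derivative \<gamma>' t) (at t within {0..1})
                 \<and> (\<gamma>' has_vector_derivative \<gamma>'' t) (at t within {0..1})
                 \<and> \<gamma>' t \<noteq> 0)
     \<and> continuous_on {0..1} \<gamma>'')"

definition L2_curve :: "(real \<Rightarrow> real \<times> real) \<Rightarrow> (real \<times> real \<Rightarrow> complex) \<Rightarrow> real" where
  "L2_curve \<gamma> f = sqrt (integral {0..1}
      (\<lambda>t. (cmod (f (\<gamma> t)))\<^sup>2 * norm (vector_derivative \<gamma> (at t within {0..1}))))"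

definition L2_torus :: "(real \<times> real \<Rightarrow> complex) \<Rightarrow> real" where
  "L2_torus f = sqrt (integral (cbox (0,0) (1,1)) (\<lambda>x. (cmod (f x))\<^sup>2))"

end

theory Submission
  imports Defs
begin

text \<open>Write \<open>\<phi> = \<Sum> a\<^sub>\<xi> e(\<xi>\<cdot>x)\<close> over the lattice points \<open>\<xi>\<close> on the circle of radius \<open>R = \<surd>E\<close>.
  Then \<open>\<parallel>\<phi>\<parallel>\<^sup>2 = \<Sum> \<bar>a\<^sub>\<xi>\<bar>\<^sup>2\<close> on the torus, while \<open>\<bar>\<phi>(\<gamma> t)\<bar>\<^sup>2 \<bar>\<gamma>' t\<bar>\<close> expands into the kernel
  \<open>e((\<xi> - \<eta>)\<cdot>\<gamma> t) \<bar>\<gamma>' t\<bar>\<close>. Cut the parameter interval into about \<open>R^(3/5)\<close> pieces of length \<open>h\<close>.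
  On a piece, replacing \<open>\<gamma>\<close> by its tangent line costs \<open>O(h\<^sup>2 (1 + h \<bar>\<xi> - \<eta>\<bar>))\<close>, and the linear
  phase integrates to at most \<open>h\<close> and at most \<open>1 / (\<pi> \<bar>\<gamma>' t\<^sub>0 \<cdot> (\<xi> - \<eta>)\<bar>)\<close>. By the Schur test it
  remains to bound the row sums of this kernel by \<open>O(h)\<close>. Here the separation
  \<open>\<bar>\<xi> - \<eta>\<bar> > R^(9/10)\<close> enters: lattice points of the circle lying on the same side of a line
  \<open>\<real> v\<close> have \<open>v\<close>-coordinates more than \<open>R^(4/5) / 4\<close> apart, so a strip of width \<open>2T\<close> contains
  \<open>O(T R^(-4/5) + 1)\<close> of them. Hence there are \<open>O(R^(1/5))\<close> lattice points in all, and only \<open>O(1)\<close>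
  of them with \<open>\<bar>\<gamma>' t\<^sub>0 \<cdot> (\<xi> - \<eta>)\<bar> \<le> \<bar>\<gamma>' t\<^sub>0\<bar> R^(4/5)\<close>, for which the trivial bound \<open>h\<close> is used.\<close>

section \<open>Integrals of linear phases\<close>

lemma norm_exp_i_diff_le: "cmod (exp (\<i> * of_real a) - exp (\<i> * of_real b)) \<le> \<bar>a - b\<bar>"
proof -
  have "norm (exp (\<i> * of_real a) - exp (\<i> * of_real b)) \<le> 1 * norm (a - b)"
  proof (rule differentiable_bound[where S=UNIV and f'="\<lambda>t h. h *\<^sub>R (\<i> * exp (\<i> * of_real t))"])
    fix t :: real
    have "((\<lambda>t. exp (t *\<^sub>R \<i>)) has_vector_derivative \<i> * exp (t *\<^sub>R \<i>)) (at t)"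
      by (rule exp_scaleR_has_vector_derivative_left)
    then show "((\<lambda>t. exp (\<i> * of_real t)) has_derivative (\<lambda>h. h *\<^sub>R (\<i> * exp (\<i> * of_real t)))) (at t within UNIV)"
      by (simp add: has_vector_derivative_def scaleR_conv_of_real mult.commute)
    show "onorm (\<lambda>h. h *\<^sub>R (\<i> * exp (\<i> * of_real t))) \<le> 1"
      by (rule onorm_le) (simp add: norm_mult)
  qed auto
  then show ?thesis by simp
qed

lemma has_integral_exp_linear_phase:
  assumes "a \<le> b" "\<beta> \<noteq> 0"
  shows "((\<lambda>t. exp (\<i> * of_real (c + \<beta> * t))) has_integral
     (exp (\<i> * of_real (c + \<beta> * b)) - exp (\<i> * of_real (c + \<beta> * a))) / (\<i> * of_real \<beta>)) {a..b}"
proof -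
  have "((\<lambda>t. exp (\<i> * of_real (c + \<beta> * t)) / (\<i> * of_real \<beta>)) has_vector_derivative
      exp (\<i> * of_real (c + \<beta> * t))) (at t within {a..b})" for t
  proof -
    have "((\<lambda>z. exp (\<i> * (of_real c + of_real \<beta> * z)) / (\<i> * of_real \<beta>)) has_field_derivative
      exp (\<i> * (of_real c + of_real \<beta> * of_real t))) (at (of_real t))"
      using assms by (auto intro!: derivative_eq_intros simp: field_simps)
    from has_vector_derivative_real_field[OF this] show ?thesis by simp
  qed
  from fundamental_theorem_of_calculus[OF assms(1) this] show ?thesis
    by (simp add: diff_divide_distrib)
qed

lemma norm_integral_exp_linear_phase_le:
  assumes "a \<le> b" "\<beta> \<noteq> 0"
  shows "cmod (integral {a..b} (\<lambda>t. exp (\<i> * of_real (c + \<beta> * t)))) \<le> 2 / \<bar>\<beta>\<bar>"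
proof -
  have "cmod (integral {a..b} (\<lambda>t. exp (\<i> * of_real (c + \<beta> * t)))) =
     cmod (exp (\<i> * of_real (c + \<beta> * b)) - exp (\<i> * of_real (c + \<beta> * a))) / \<bar>\<beta>\<bar>"
    unfolding integral_unique[OF has_integral_exp_linear_phase[OF assms]]
    by (simp add: norm_divide norm_mult)
  also have "\<dots> \<le> 2 / \<bar>\<beta>\<bar>"
    using norm_triangle_ineq4[of "exp (\<i> * of_real (c + \<beta> * b))" "exp (\<i> * of_real (c + \<beta> * a))"]
    by (intro divide_right_mono) auto
  finally show ?thesis .
qed

lemma integral_exp_2pi_int: "integral {0..1} (\<lambda>t. exp (\<i> * of_real (2 * pi * of_int k * t))) = (if k = 0 then 1 else 0)"
proof (cases "k = 0")
  case False
  then have "2 * pi * of_int k \<noteq> 0" by simp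
  from integral_unique[OF has_integral_exp_linear_phase[OF _ this, of 0 1 0]] show ?thesis
    using False by (simp add: mult.commute mult.left_commute)
qed simp

section \<open>Plane waves and Parseval's identity\<close>

definition plane_wave :: "int \<times> int \<Rightarrow> real \<times> real \<Rightarrow> complex" where
  "plane_wave \<xi> x = exp (\<i> * of_real (2 * pi * dotZ x \<xi>))"

definition normZ :: "int \<times> int \<Rightarrow> real" where
  "normZ \<xi> = sqrt (of_int (normsqZ \<xi>))"

lemma dotZ_add_left: "dotZ (x + y) \<xi> = dotZ x \<xi> + dotZ y \<xi>"
  and dotZ_diff_left: "dotZ (x - y) \<xi> = dotZ x \<xi> - dotZ y \<xi>"
  and dotZ_scaleR_left: "dotZ (s *\<^sub>R x) \<xi> = s * dotZ x \<xi>"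
  and dotZ_diff_right: "dotZ x (\<xi> - \<eta>) = dotZ x \<xi> - dotZ x \<eta>"
  and dotZ_uminus_right: "dotZ x (- \<xi>) = - dotZ x \<xi>"
  by (simp_all add: dotZ_def algebra_simps)

lemma normsqZ_nonneg: "0 \<le> normsqZ \<xi>"
  by (simp add: normsqZ_def)

lemma normsqZ_uminus: "normsqZ (- \<xi>) = normsqZ \<xi>"
  by (simp add: normsqZ_def)

lemma abs_dotZ_le: "\<bar>dotZ x \<xi>\<bar> \<le> norm x * normZ \<xi>"
proof -
  obtain a b where x: "x = (a, b)" by (cases x)
  define c d where "c = real_of_int (fst \<xi>)" and "d = real_of_int (snd \<xi>)"
  have "(a * c + b * d)\<^sup>2 \<le> (a\<^sup>2 + b\<^sup>2) * (c\<^sup>2 + d\<^sup>2)"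
    using zero_le_power2[of "a * d - b * c"] by (simp add: power2_eq_square algebra_simps)
  then have "sqrt ((a * c + b * d)\<^sup>2) \<le> sqrt ((a\<^sup>2 + b\<^sup>2) * (c\<^sup>2 + d\<^sup>2))"
    by (rule real_sqrt_le_mono)
  then show ?thesis
    by (simp add: x dotZ_def norm_Pair normZ_def normsqZ_def c_def d_def real_sqrt_mult)
qed

lemma normZ_diff_le:
  assumes "\<xi> \<in> latt_circle E" "\<eta> \<in> latt_circle E"
  shows "normZ (\<xi> - \<eta>) \<le> 2 * sqrt (real E)"
proof -
  have "normsqZ (\<xi> - \<eta>) \<le> 2 * normsqZ \<xi> + 2 * normsqZ \<eta>"
    using zero_le_power2[of "fst \<xi> + fst \<eta>"] zero_le_power2[of "snd \<xi> + snd \<eta>"]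
    by (simp add: normsqZ_def power2_eq_square algebra_simps)
  with assms have "sqrt (of_int (normsqZ (\<xi> - \<eta>))) \<le> sqrt (4 * real E)"
    by (intro real_sqrt_le_mono) (simp add: latt_circle_def)
  then show ?thesis by (simp add: normZ_def real_sqrt_mult)
qed

lemma finite_latt_circle: "finite (latt_circle E)"
proof (rule finite_subset)
  show "latt_circle E \<subseteq> {-int E..int E} \<times> {-int E..int E}"
  proof
    fix \<xi> assume "\<xi> \<in> latt_circle E"
    then have "(fst \<xi>)\<^sup>2 + (snd \<xi>)\<^sup>2 = int E"
      by (simp add: latt_circle_def normsqZ_def)
    then have "(fst \<xi>)\<^sup>2 \<le> int E" "(snd \<xi>)\<^sup>2 \<le> int E"
      by (smt (verit) zero_le_power2)+
    moreover have "\<bar>k\<bar> \<le> k\<^sup>2" for k :: int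
      using mult_left_mono[of 1 "\<bar>k\<bar>" "\<bar>k\<bar>"]
      by (cases "k = 0") (auto simp: power2_eq_square abs_mult[symmetric])
    ultimately have "\<bar>fst \<xi>\<bar> \<le> int E" "\<bar>snd \<xi>\<bar> \<le> int E"
      by (meson order_trans)+
    then show "\<xi> \<in> {-int E..int E} \<times> {-int E..int E}"
      by (auto simp: mem_Times_iff abs_le_iff)
  qed
qed simp

lemma integral_double_sum_mult:
  fixes f :: "'i \<Rightarrow> 'i \<Rightarrow> 'a::euclidean_space \<Rightarrow> 'b::real_normed_field"
  assumes "finite S" "\<And>\<xi> \<eta>. \<xi> \<in> S \<Longrightarrow> \<eta> \<in> S \<Longrightarrow> f \<xi> \<eta> integrable_on X"
  shows "integral X (\<lambda>x. \<Sum>\<xi>\<in>S. \<Sum>\<eta>\<in>S. c \<xi> \<eta> * f \<xi> \<eta> x) =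
    (\<Sum>\<xi>\<in>S. \<Sum>\<eta>\<in>S. c \<xi> \<eta> * integral X (f \<xi> \<eta>))"
  using assms by (simp add: integral_sum integrable_sum integrable_on_mult_right)

lemma norm_plane_wave [simp]: "cmod (plane_wave \<xi> x) = 1"
  by (simp add: plane_wave_def)

lemma plane_wave_mult_cnj: "plane_wave \<xi> x * cnj (plane_wave \<eta> x) = plane_wave (\<xi> - \<eta>) x"
  by (simp add: plane_wave_def dotZ_diff_right exp_cnj exp_add[symmetric] algebra_simps)

lemma continuous_on_plane_wave [continuous_intros]:
  "continuous_on S f \<Longrightarrow> continuous_on S (\<lambda>t. plane_wave \<xi> (f t))"
  unfolding plane_wave_def dotZ_def by (intro continuous_intros)

lemma norm_plane_wave_diff_le: "cmod (plane_wave \<xi> x - plane_wave \<xi> y) \<le> 2 * pi * \<bar>dotZ (x - y) \<xi>\<bar>"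
  using norm_exp_i_diff_le[of "2 * pi * dotZ x \<xi>" "2 * pi * dotZ y \<xi>"]
  by (simp add: plane_wave_def dotZ_diff_left abs_mult right_diff_distrib[symmetric])

lemma eigfun_eq_sum_plane_wave: "eigfun E a x = (\<Sum>\<xi>\<in>latt_circle E. a \<xi> * plane_wave \<xi> x)"
  unfolding eigfun_def plane_wave_def by (simp add: mult_ac)

lemma norm_eigfun_sq:
  "complex_of_real ((cmod (eigfun E a x))\<^sup>2) =
     (\<Sum>\<xi>\<in>latt_circle E. \<Sum>\<eta>\<in>latt_circle E. a \<xi> * cnj (a \<eta>) * plane_wave (\<xi> - \<eta>) x)"
  unfolding complex_norm_square eigfun_eq_sum_plane_wave
  by (simp add: sum_product plane_wave_mult_cnj[symmetric] algebra_simps)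

lemma continuous_on_norm_eigfun_sq [continuous_intros]:
  "continuous_on S f \<Longrightarrow> continuous_on S (\<lambda>t. (cmod (eigfun E a (f t)))\<^sup>2)"
  unfolding eigfun_eq_sum_plane_wave by (intro continuous_intros)

lemma integral_plane_wave_unit_square:
  "integral (cbox (0, 0) (1, 1)) (plane_wave \<xi>) = (if \<xi> = 0 then 1 else 0)"
proof -
  have split: "plane_wave \<xi> (x, y) =
      exp (\<i> * of_real (2 * pi * of_int (fst \<xi>) * x)) * exp (\<i> * of_real (2 * pi * of_int (snd \<xi>) * y))" for x y
    by (simp add: plane_wave_def dotZ_def exp_add[symmetric] algebra_simps)
  have "integral (cbox (0, 0) (1, 1)) (plane_wave \<xi>) =
      integral (cbox 0 1) (\<lambda>x. integral (cbox 0 1) (\<lambda>y. plane_wave \<xi> (x, y)))"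
    by (rule integral_prod_continuous) (intro continuous_intros continuous_on_id)
  also have "\<dots> = (if fst \<xi> = 0 then 1 else 0) * (if snd \<xi> = 0 then 1 else 0)"
    unfolding split cbox_interval
    by (simp only: integral_mult_right integral_mult_left integral_exp_2pi_int)
  also have "\<dots> = (if \<xi> = 0 then 1 else 0)"
    by (cases \<xi>) (auto simp: zero_prod_def)
  finally show ?thesis .
qed

lemma L2_torus_eigfun: "L2_torus (eigfun E a) = sqrt (\<Sum>\<xi>\<in>latt_circle E. (cmod (a \<xi>))\<^sup>2)"
proof -
  let ?S = "latt_circle E" and ?Q = "cbox (0, 0) (1, 1) :: (real \<times> real) set"
  have int: "plane_wave \<xi> integrable_on ?Q" for \<xi>
    by (intro integrable_continuous continuous_intros continuous_on_id)
  have "complex_of_real (integral ?Q (\<lambda>x. (cmod (eigfun E a x))\<^sup>2)) =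
        integral ?Q (\<lambda>x. complex_of_real ((cmod (eigfun E a x))\<^sup>2))"
    by (intro integral_unique[symmetric] has_integral_of_real integrable_integral
        integrable_continuous continuous_intros continuous_on_id)
  also have "\<dots> = (\<Sum>\<xi>\<in>?S. \<Sum>\<eta>\<in>?S. a \<xi> * cnj (a \<eta>) * integral ?Q (plane_wave (\<xi> - \<eta>)))"
    unfolding norm_eigfun_sq by (intro integral_double_sum_mult finite_latt_circle int)
  also have "\<dots> = (\<Sum>\<xi>\<in>?S. a \<xi> * cnj (a \<xi>))"
    by (simp add: integral_plane_wave_unit_square if_distrib finite_latt_circle cong: if_cong)
  also have "\<dots> = complex_of_real (\<Sum>\<xi>\<in>?S. (cmod (a \<xi>))\<^sup>2)"
    by (simp only: of_real_sum complex_norm_square)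
  finally show ?thesis
    unfolding L2_torus_def by (simp only: of_real_eq_iff)
qed

section \<open>Separated lattice points on a circle\<close>

definition latt_separated :: "nat \<Rightarrow> real \<Rightarrow> bool" where
  "latt_separated E D \<longleftrightarrow>
     (\<forall>\<xi>\<in>latt_circle E. \<forall>\<eta>\<in>latt_circle E. \<xi> \<noteq> \<eta> \<longrightarrow> D\<^sup>2 < of_int (normsqZ (\<xi> - \<eta>)))"

definition perp :: "real \<times> real \<Rightarrow> real \<times> real" where
  "perp v = (- snd v, fst v)"

lemma card_le_of_separated:
  fixes X :: "real set"
  assumes X: "X \<subseteq> {c - T..c + T}" and "0 \<le> T" "0 < d"
    and gap: "\<And>x y. x \<in> X \<Longrightarrow> y \<in> X \<Longrightarrow> x \<noteq> y \<Longrightarrow> d \<le> \<bar>x - y\<bar>"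
  shows "real (card X) \<le> 2 * T / d + 1"
proof -
  define bucket where "bucket x = \<lfloor>(x - (c - T)) / d\<rfloor>" for x
  have "inj_on bucket X"
  proof (rule inj_onI, rule ccontr)
    fix x y assume xy: "x \<in> X" "y \<in> X" "bucket x = bucket y" "x \<noteq> y"
    then have "\<bar>(x - (c - T)) / d - (y - (c - T)) / d\<bar> < 1"
      unfolding bucket_def by linarith
    then have "\<bar>x - y\<bar> < d"
      using \<open>0 < d\<close> by (simp add: diff_divide_distrib[symmetric] abs_divide)
    with gap[OF xy(1,2,4)] show False by simp
  qed
  moreover have "bucket ` X \<subseteq> {0..\<lfloor>2 * T / d\<rfloor>}"
  proof
    fix k assume "k \<in> bucket ` X"
    then obtain x where "x \<in> X" "k = bucket x" by blast
    with X have "0 \<le> x - (c - T)" "x - (c - T) \<le> 2 * T" by auto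
    with \<open>0 < d\<close> show "k \<in> {0..\<lfloor>2 * T / d\<rfloor>}"
      by (auto simp: \<open>k = bucket x\<close> bucket_def intro!: floor_mono divide_right_mono)
  qed
  ultimately have "card X \<le> card {0..\<lfloor>2 * T / d\<rfloor>}"
    by (metis card_image card_mono finite_atLeastAtMost_int)
  then have "real (card X) \<le> real (nat (\<lfloor>2 * T / d\<rfloor> + 1))" by simp
  also have "\<dots> = of_int \<lfloor>2 * T / d\<rfloor> + 1" using \<open>0 \<le> T\<close> \<open>0 < d\<close> by simp
  finally show ?thesis by linarith
qed

lemma dotZ_sq_add_dotZ_perp_sq:
  assumes "norm v = 1"
  shows "(dotZ v \<xi>)\<^sup>2 + (dotZ (perp v) \<xi>)\<^sup>2 = of_int (normsqZ \<xi>)"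
proof -
  obtain a b where v: "v = (a, b)" by (cases v)
  have "a\<^sup>2 + b\<^sup>2 = 1"
    using assms by (simp add: v norm_Pair)
  moreover have "(dotZ v \<xi>)\<^sup>2 + (dotZ (perp v) \<xi>)\<^sup>2 =
      (a\<^sup>2 + b\<^sup>2) * ((of_int (fst \<xi>))\<^sup>2 + (of_int (snd \<xi>))\<^sup>2)"
    by (simp add: v dotZ_def perp_def power2_eq_square algebra_simps)
  ultimately show ?thesis by (simp add: normsqZ_def)
qed

lemma abs_dotZ_unit_le:
  assumes "norm v = 1" "\<xi> \<in> latt_circle E" "R\<^sup>2 = real E" "0 \<le> R"
  shows "\<bar>dotZ v \<xi>\<bar> \<le> R"
proof -
  have "(dotZ v \<xi>)\<^sup>2 + (dotZ (perp v) \<xi>)\<^sup>2 = R\<^sup>2"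
    using dotZ_sq_add_dotZ_perp_sq[OF assms(1), of \<xi>] assms(2,3) by (simp add: latt_circle_def)
  then have "(dotZ v \<xi>)\<^sup>2 \<le> R\<^sup>2"
    by (smt (verit) zero_le_power2)
  then show ?thesis using assms(4) by (metis abs_le_square_iff abs_of_nonneg)
qed

lemma sq_diff_le_abs_diff_sq:
  fixes a b :: real
  assumes "0 \<le> a * b"
  shows "(a - b)\<^sup>2 \<le> \<bar>a\<^sup>2 - b\<^sup>2\<bar>"
proof -
  have "\<bar>a - b\<bar> \<le> \<bar>a + b\<bar>"
    using assms by (auto simp: abs_if zero_le_mult_iff)
  then have "\<bar>a - b\<bar> * \<bar>a - b\<bar> \<le> \<bar>a - b\<bar> * \<bar>a + b\<bar>"
    by (intro mult_left_mono) auto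
  then show ?thesis by (simp add: power2_eq_square abs_mult[symmetric] algebra_simps)
qed

text \<open>Two lattice points on the circle of radius \<open>R\<close> on the same side of the line \<open>\<real> v\<close> are
  at distance at most \<open>2 \<surd>(R \<bar>\<Delta>\<bar>)\<close> when their coordinates along \<open>v\<close> differ by \<open>\<Delta>\<close>, so
  \<open>D\<close>-separation forces \<open>\<bar>\<Delta>\<bar> > D\<^sup>2 / (4R)\<close>.\<close>
lemma dotZ_gap_same_side:
  assumes v: "norm v = 1" and sep: "latt_separated E D" and R: "R\<^sup>2 = real E" "0 < R"
    and \<xi>\<eta>: "\<xi> \<in> latt_circle E" "\<eta> \<in> latt_circle E" "\<xi> \<noteq> \<eta>"
    and side: "0 \<le> dotZ (perp v) \<xi> * dotZ (perp v) \<eta>"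
  shows "D\<^sup>2 / (4 * R) < \<bar>dotZ v \<xi> - dotZ v \<eta>\<bar>"
proof (rule ccontr)
  let ?d = "D\<^sup>2 / (4 * R)" and ?\<Delta> = "dotZ v \<xi> - dotZ v \<eta>"
  assume "\<not> ?thesis"
  then have \<Delta>: "\<bar>?\<Delta>\<bar> \<le> ?d" by simp
  have circ: "(dotZ v \<zeta>)\<^sup>2 + (dotZ (perp v) \<zeta>)\<^sup>2 = R\<^sup>2" if "\<zeta> \<in> latt_circle E" for \<zeta>
    using dotZ_sq_add_dotZ_perp_sq[OF v] that R(1) by (simp add: latt_circle_def)
  have sum_le: "\<bar>dotZ v \<xi> + dotZ v \<eta>\<bar> \<le> 2 * R"
    using abs_dotZ_unit_le[OF v \<xi>\<eta>(1) R(1)] abs_dotZ_unit_le[OF v \<xi>\<eta>(2) R(1)] R(2) by linarith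
  have "(dotZ (perp v) \<xi> - dotZ (perp v) \<eta>)\<^sup>2 \<le> \<bar>(dotZ (perp v) \<xi>)\<^sup>2 - (dotZ (perp v) \<eta>)\<^sup>2\<bar>"
    using side by (rule sq_diff_le_abs_diff_sq)
  also have "\<dots> = \<bar>?\<Delta>\<bar> * \<bar>dotZ v \<xi> + dotZ v \<eta>\<bar>"
    using circ[OF \<xi>\<eta>(1)] circ[OF \<xi>\<eta>(2)]
    by (simp add: abs_mult[symmetric] power2_eq_square algebra_simps)
  also have "\<dots> \<le> ?d * (2 * R)"
    using \<Delta> sum_le by (intro mult_mono) auto
  finally have perp_le: "(dotZ (perp v) \<xi> - dotZ (perp v) \<eta>)\<^sup>2 \<le> ?d * (2 * R)" .
  have "?\<Delta>\<^sup>2 = \<bar>?\<Delta>\<bar> * \<bar>?\<Delta>\<bar>" by (simp add: power2_eq_square)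
  also have "\<dots> \<le> ?d * (2 * R)"
    using \<Delta> sum_le abs_dotZ_unit_le[OF v \<xi>\<eta>(1) R(1)] abs_dotZ_unit_le[OF v \<xi>\<eta>(2) R(1)] R(2)
    by (intro mult_mono) auto
  finally have along_le: "?\<Delta>\<^sup>2 \<le> ?d * (2 * R)" .
  have "of_int (normsqZ (\<xi> - \<eta>)) = ?\<Delta>\<^sup>2 + (dotZ (perp v) \<xi> - dotZ (perp v) \<eta>)\<^sup>2"
    using dotZ_sq_add_dotZ_perp_sq[OF v, of "\<xi> - \<eta>"] by (simp add: dotZ_diff_right)
  also have "\<dots> \<le> ?d * (2 * R) + ?d * (2 * R)"
    using along_le perp_le by (rule add_mono)
  also have "\<dots> = D\<^sup>2" using R(2) by (simp add: field_simps)
  finally show False using sep \<xi>\<eta> unfolding latt_separated_def by (meson not_le)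
qed

lemma card_strip_same_side_le:
  assumes v: "norm v = 1" and sep: "latt_separated E D" "0 < D" and R: "R\<^sup>2 = real E" "0 < R"
    and "0 \<le> T" and A: "A \<subseteq> {\<eta>\<in>latt_circle E. \<bar>dotZ v \<eta> - c\<bar> \<le> T}"
    and side: "\<And>\<xi> \<eta>. \<xi> \<in> A \<Longrightarrow> \<eta> \<in> A \<Longrightarrow> 0 \<le> dotZ (perp v) \<xi> * dotZ (perp v) \<eta>"
  shows "real (card A) \<le> 8 * T * R / D\<^sup>2 + 1"
proof -
  let ?d = "D\<^sup>2 / (4 * R)"
  have gap: "?d < \<bar>dotZ v \<xi> - dotZ v \<eta>\<bar>" if "\<xi> \<in> A" "\<eta> \<in> A" "\<xi> \<noteq> \<eta>" for \<xi> \<eta>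
    using dotZ_gap_same_side[OF v sep(1) R] that A side by blast
  have "0 < ?d" using sep(2) R(2) by simp
  then have "inj_on (dotZ v) A"
    using gap by (force simp: inj_on_def)
  then have "card A = card (dotZ v ` A)" by (simp add: card_image)
  also have "real \<dots> \<le> 2 * T / ?d + 1"
  proof (rule card_le_of_separated[OF _ \<open>0 \<le> T\<close> \<open>0 < ?d\<close>])
    show "dotZ v ` A \<subseteq> {c - T..c + T}" using A by (force simp: abs_le_iff)
    show "?d \<le> \<bar>x - y\<bar>" if "x \<in> dotZ v ` A" "y \<in> dotZ v ` A" "x \<noteq> y" for x y
      using that gap by (force simp: less_imp_le)
  qed
  also have "2 * T / ?d = 8 * T * R / D\<^sup>2" using sep(2) R(2) by (simp add: field_simps)
  finally show ?thesis .
qed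

lemma card_strip_le:
  assumes v: "norm v = 1" and sep: "latt_separated E D" "0 < D" and R: "R\<^sup>2 = real E" "0 < R"
    and T: "0 \<le> T"
  shows "real (card {\<eta>\<in>latt_circle E. \<bar>dotZ v \<eta> - c\<bar> \<le> T}) \<le> 16 * T * R / D\<^sup>2 + 2"
proof -
  let ?A = "{\<eta>\<in>latt_circle E. \<bar>dotZ v \<eta> - c\<bar> \<le> T}"
  let ?P = "{\<eta>\<in>?A. 0 \<le> dotZ (perp v) \<eta>}" and ?N = "{\<eta>\<in>?A. dotZ (perp v) \<eta> < 0}"
  have "card ?A \<le> card ?P + card ?N"
    by (rule order_trans[OF eq_imp_le card_Un_le]) (rule arg_cong[where f=card], auto)
  moreover have "real (card ?P) \<le> 8 * T * R / D\<^sup>2 + 1"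
    by (rule card_strip_same_side_le[OF v sep R T]) auto
  moreover have "real (card ?N) \<le> 8 * T * R / D\<^sup>2 + 1"
    by (rule card_strip_same_side_le[OF v sep R T]) (auto intro: mult_nonpos_nonpos)
  ultimately show ?thesis by linarith
qed

lemma card_latt_circle_le:
  assumes sep: "latt_separated E D" "0 < D" and R: "R\<^sup>2 = real E" "0 < R"
  shows "real (card (latt_circle E)) \<le> 16 * R\<^sup>2 / D\<^sup>2 + 2"
proof -
  have v: "norm (1::real, 0::real) = 1" by (simp add: norm_Pair)
  have "latt_circle E = {\<eta>\<in>latt_circle E. \<bar>dotZ (1, 0) \<eta> - 0\<bar> \<le> R}"
    using abs_dotZ_unit_le[OF v _ R(1)] R(2) by auto
  then show ?thesis
    using card_strip_le[OF v sep R, of R 0] R(2) by (simp add: power2_eq_square)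
qed

lemma card_strip_scaled_le:
  assumes "u \<noteq> 0" and sep: "latt_separated E D" "0 < D" and R: "R\<^sup>2 = real E" "0 < R"
    and "0 \<le> T"
  shows "real (card {\<eta>\<in>latt_circle E. \<bar>dotZ u (\<xi> - \<eta>)\<bar> \<le> norm u * T}) \<le> 16 * T * R / D\<^sup>2 + 2"
proof -
  define v where "v = u /\<^sub>R norm u"
  have v: "norm v = 1" using \<open>u \<noteq> 0\<close> by (simp add: v_def)
  have u: "dotZ u \<zeta> = norm u * dotZ v \<zeta>" for \<zeta>
    using \<open>u \<noteq> 0\<close> by (simp add: v_def dotZ_scaleR_left)
  have "{\<eta>\<in>latt_circle E. \<bar>dotZ u (\<xi> - \<eta>)\<bar> \<le> norm u * T} =
      {\<eta>\<in>latt_circle E. \<bar>dotZ v \<eta> - dotZ v \<xi>\<bar> \<le> T}"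
    using \<open>u \<noteq> 0\<close>
    by (simp add: u dotZ_diff_right abs_mult abs_minus_commute right_diff_distrib[symmetric])
  then show ?thesis using card_strip_le[OF v sep R \<open>0 \<le> T\<close>] by simp
qed

section \<open>Restriction to a regular curve\<close>

lemma schur_test:
  fixes f B :: "'a::ab_group_add \<Rightarrow> real"
  assumes "finite S" "\<And>w. 0 \<le> B w" "\<And>w. B (- w) = B w"
    and row: "\<And>x. x \<in> S \<Longrightarrow> (\<Sum>y\<in>S. B (x - y)) \<le> Q"
  shows "(\<Sum>x\<in>S. \<Sum>y\<in>S. f x * f y * B (x - y)) \<le> Q * (\<Sum>x\<in>S. (f x)\<^sup>2)"
proof -
  have "B (y - x) = B (x - y)" for x y
    using assms(3)[of "x - y"] by simp
  then have sym: "(\<Sum>x\<in>S. \<Sum>y\<in>S. (f y)\<^sup>2 * B (x - y)) = (\<Sum>x\<in>S. \<Sum>y\<in>S. (f x)\<^sup>2 * B (x - y))"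
    by (subst sum.swap) simp
  have "(\<Sum>x\<in>S. \<Sum>y\<in>S. f x * f y * B (x - y)) \<le>
      (\<Sum>x\<in>S. \<Sum>y\<in>S. ((f x)\<^sup>2 + (f y)\<^sup>2) / 2 * B (x - y))"
  proof (intro sum_mono mult_right_mono assms(2))
    fix x y
    show "f x * f y \<le> ((f x)\<^sup>2 + (f y)\<^sup>2) / 2"
      using zero_le_power2[of "f x - f y"] by (simp add: power2_eq_square algebra_simps)
  qed
  also have "\<dots> = ((\<Sum>x\<in>S. \<Sum>y\<in>S. (f x)\<^sup>2 * B (x - y)) + (\<Sum>x\<in>S. \<Sum>y\<in>S. (f y)\<^sup>2 * B (x - y))) / 2"
    by (simp add: distrib_right add_divide_distrib sum.distrib sum_divide_distrib)
  also have "\<dots> = (\<Sum>x\<in>S. \<Sum>y\<in>S. (f x)\<^sup>2 * B (x - y))"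
    unfolding sym by (simp only: add_divide_distrib field_sum_of_halves)
  also have "\<dots> = (\<Sum>x\<in>S. (f x)\<^sup>2 * (\<Sum>y\<in>S. B (x - y)))"
    by (simp add: sum_distrib_left)
  also have "\<dots> \<le> (\<Sum>x\<in>S. (f x)\<^sup>2 * Q)"
    by (intro sum_mono mult_left_mono row) auto
  finally show ?thesis by (simp add: sum_distrib_left mult.commute)
qed

lemma integral_split_uniform:
  fixes f :: "real \<Rightarrow> 'a::banach" and M :: nat
  assumes "continuous_on {0..1} f" "0 < M"
  shows "integral {0..1} f = (\<Sum>j<M. integral {real j / M .. real j / M + 1 / M} f)"
proof -
  have "integral {0..real k / M} f = (\<Sum>j<k. integral {real j / M .. real j / M + 1 / M} f)"
    if "k \<le> M" for k
    using that
  proof (induction k)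
    case (Suc k)
    have "{0..real (Suc k) / M} \<subseteq> {0..1}" using Suc.prems by (auto simp: field_simps)
    then have "f integrable_on {0..real (Suc k) / M}"
      by (rule integrable_continuous_interval[OF continuous_on_subset[OF assms(1)]])
    from Henstock_Kurzweil_Integration.integral_combine[OF _ _ this, of "real k / M"] Suc assms(2)
    have "integral {0..real (Suc k) / M} f = integral {0..real k / M} f + integral {real k / M..real (Suc k) / M} f"
      by (simp add: divide_right_mono)
    moreover have "real (Suc k) / M = real k / M + 1 / M" by (simp add: add_divide_distrib)
    ultimately show ?case using Suc by simp
  qed simp
  from this[of M] assms(2) show ?thesis by simp
qed

lemma norm_integral_plane_wave_line_le:
  assumes "0 \<le> h"
  shows "cmod (integral {t0..t0+h} (\<lambda>t. plane_wave \<xi> (p + (t - t0) *\<^sub>R u))) \<le> h"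
    and "dotZ u \<xi> \<noteq> 0 \<Longrightarrow>
      cmod (integral {t0..t0+h} (\<lambda>t. plane_wave \<xi> (p + (t - t0) *\<^sub>R u))) \<le> 1 / (pi * \<bar>dotZ u \<xi>\<bar>)"
proof -
  define c \<beta> where "c = 2 * pi * (dotZ p \<xi> - t0 * dotZ u \<xi>)" and "\<beta> = 2 * pi * dotZ u \<xi>"
  have "2 * pi * dotZ (p + (t - t0) *\<^sub>R u) \<xi> = c + \<beta> * t" for t
    by (simp add: c_def \<beta>_def dotZ_add_left dotZ_diff_left dotZ_scaleR_left scaleR_diff_left algebra_simps)
  then have line: "plane_wave \<xi> (p + (t - t0) *\<^sub>R u) = exp (\<i> * of_real (c + \<beta> * t))" for t
    by (simp only: plane_wave_def)
  show "cmod (integral {t0..t0+h} (\<lambda>t. plane_wave \<xi> (p + (t - t0) *\<^sub>R u))) \<le> h"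
    using integral_bound[of t0 "t0 + h" "\<lambda>t. plane_wave \<xi> (p + (t - t0) *\<^sub>R u)" 1] assms
    by (simp add: continuous_intros)
  assume "dotZ u \<xi> \<noteq> 0"
  then have "cmod (integral {t0..t0+h} (\<lambda>t. exp (\<i> * of_real (c + \<beta> * t)))) \<le> 2 / \<bar>\<beta>\<bar>"
    using assms by (intro norm_integral_exp_linear_phase_le) (auto simp: \<beta>_def)
  then show "cmod (integral {t0..t0+h} (\<lambda>t. plane_wave \<xi> (p + (t - t0) *\<^sub>R u))) \<le> 1 / (pi * \<bar>dotZ u \<xi>\<bar>)"
    by (simp add: line \<beta>_def abs_mult)
qed

locale regular_c2_curve =
  fixes \<gamma> \<gamma>' \<gamma>'' :: "real \<Rightarrow> real \<times> real" and smax smin amax :: real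
  assumes velocity: "\<And>t. t \<in> {0..1} \<Longrightarrow> (\<gamma> has_vector_derivative \<gamma>' t) (at t within {0..1})"
    and acceleration: "\<And>t. t \<in> {0..1} \<Longrightarrow> (\<gamma>' has_vector_derivative \<gamma>'' t) (at t within {0..1})"
    and speed_le: "\<And>t. t \<in> {0..1} \<Longrightarrow> norm (\<gamma>' t) \<le> smax"
    and speed_ge: "\<And>t. t \<in> {0..1} \<Longrightarrow> smin \<le> norm (\<gamma>' t)"
    and smin_pos: "0 < smin"
    and acceleration_le: "\<And>t. t \<in> {0..1} \<Longrightarrow> norm (\<gamma>'' t) \<le> amax"
begin

lemma continuous_on_curve: "continuous_on {0..1} \<gamma>"
  using velocity has_vector_derivative_continuous continuous_on_eq_continuous_within by blast

lemma continuous_on_velocity: "continuous_on {0..1} \<gamma>'"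
  using acceleration has_vector_derivative_continuous continuous_on_eq_continuous_within by blast

lemma smax_nonneg: "0 \<le> smax"
  using order_trans[OF norm_ge_zero speed_le[of 0]] by simp

lemma amax_nonneg: "0 \<le> amax"
  using order_trans[OF norm_ge_zero acceleration_le[of 0]] by simp

lemma vector_derivative_curve:
  "t \<in> {0..1} \<Longrightarrow> vector_derivative \<gamma> (at t within {0..1}) = \<gamma>' t"
  by (rule vector_derivative_within_closed_interval) (auto intro: velocity)

lemma norm_velocity_diff_le:
  assumes "s \<in> {0..1}" "t \<in> {0..1}"
  shows "norm (\<gamma>' t - \<gamma>' s) \<le> amax * \<bar>t - s\<bar>"
proof -
  have "norm (\<gamma>' t - \<gamma>' s) \<le> amax * norm (t - s)"
  proof (rule differentiable_bound[where S="{0..1}" and f'="\<lambda>x h. h *\<^sub>R \<gamma>'' x"])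
    fix x :: real assume x: "x \<in> {0..1}"
    then show "(\<gamma>' has_derivative (\<lambda>h. h *\<^sub>R \<gamma>'' x)) (at x within {0..1})"
      using acceleration by (simp add: has_vector_derivative_def)
    show "onorm (\<lambda>h. h *\<^sub>R \<gamma>'' x) \<le> amax"
    proof (rule onorm_le)
      fix y :: real
      show "norm (y *\<^sub>R \<gamma>'' x) \<le> amax * norm y"
        using mult_left_mono[OF acceleration_le[OF x], of "\<bar>y\<bar>"] by (simp add: mult.commute)
    qed
  qed (use assms in auto)
  then show ?thesis by simp
qed

lemma norm_curve_minus_tangent_le:
  assumes "0 \<le> t0" "t0 + h \<le> 1" "t \<in> {t0..t0+h}"
  shows "norm (\<gamma> t - \<gamma> t0 - (t - t0) *\<^sub>R \<gamma>' t0) \<le> amax * h\<^sup>2"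
proof -
  have "norm (\<gamma> t - \<gamma> t0 - (t - t0) *\<^sub>R \<gamma>' t0) \<le> norm (t - t0) * (amax * h)"
  proof (rule vector_differentiable_bound_linearization[where S="{t0..t0+h}" and f'=\<gamma>'])
    fix x assume x: "x \<in> {t0..t0+h}"
    with assms have x01: "x \<in> {0..1}" by auto
    show "(\<gamma> has_vector_derivative \<gamma>' x) (at x within {t0..t0+h})"
      using assms by (intro has_vector_derivative_within_subset[OF velocity[OF x01]]) auto
    have "norm (\<gamma>' x - \<gamma>' t0) \<le> amax * \<bar>x - t0\<bar>"
      using assms x01 by (intro norm_velocity_diff_le) auto
    also have "\<dots> \<le> amax * h"
      using x amax_nonneg by (intro mult_left_mono) auto
    finally show "norm (\<gamma>' x - \<gamma>' t0) \<le> amax * h" .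
  qed (use assms in \<open>auto simp: closed_segment_eq_real_ivl\<close>)
  also have "\<dots> \<le> h * (amax * h)"
    using assms amax_nonneg by (intro mult_right_mono) auto
  finally show ?thesis by (simp add: power2_eq_square mult_ac)
qed

lemma norm_weighted_plane_wave_minus_tangent_le:
  assumes "0 \<le> t0" "t0 + h \<le> 1" "t \<in> {t0..t0+h}"
  shows "cmod (plane_wave \<xi> (\<gamma> t) * of_real (norm (\<gamma>' t)) -
      of_real (norm (\<gamma>' t0)) * plane_wave \<xi> (\<gamma> t0 + (t - t0) *\<^sub>R \<gamma>' t0)) \<le>
    amax * h + 2 * pi * smax * amax * h\<^sup>2 * normZ \<xi>"
proof -
  let ?L = "plane_wave \<xi> (\<gamma> t0 + (t - t0) *\<^sub>R \<gamma>' t0)"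
  have t01: "t0 \<in> {0..1}" "t \<in> {0..1}" using assms by auto
  have "plane_wave \<xi> (\<gamma> t) * of_real (norm (\<gamma>' t)) - of_real (norm (\<gamma>' t0)) * ?L =
      plane_wave \<xi> (\<gamma> t) * of_real (norm (\<gamma>' t) - norm (\<gamma>' t0)) +
      of_real (norm (\<gamma>' t0)) * (plane_wave \<xi> (\<gamma> t) - ?L)"
    by (simp add: algebra_simps)
  then have "cmod (plane_wave \<xi> (\<gamma> t) * of_real (norm (\<gamma>' t)) - of_real (norm (\<gamma>' t0)) * ?L) \<le>
      cmod (plane_wave \<xi> (\<gamma> t) * of_real (norm (\<gamma>' t) - norm (\<gamma>' t0))) +
      cmod (of_real (norm (\<gamma>' t0)) * (plane_wave \<xi> (\<gamma> t) - ?L))"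
    by (simp only: norm_triangle_ineq)
  also have "\<dots> = \<bar>norm (\<gamma>' t) - norm (\<gamma>' t0)\<bar> + norm (\<gamma>' t0) * cmod (plane_wave \<xi> (\<gamma> t) - ?L)"
    by (simp add: norm_mult del: of_real_diff)
  also have "\<bar>norm (\<gamma>' t) - norm (\<gamma>' t0)\<bar> \<le> amax * h"
    using norm_triangle_ineq3[of "\<gamma>' t" "\<gamma>' t0"] norm_velocity_diff_le[OF t01] assms(3)
      mult_left_mono[of "\<bar>t - t0\<bar>" h amax] amax_nonneg by force
  also have "cmod (plane_wave \<xi> (\<gamma> t) - ?L) \<le> 2 * pi * (amax * h\<^sup>2 * normZ \<xi>)"
  proof -
    have "cmod (plane_wave \<xi> (\<gamma> t) - ?L) \<le> 2 * pi * \<bar>dotZ (\<gamma> t - (\<gamma> t0 + (t - t0) *\<^sub>R \<gamma>' t0)) \<xi>\<bar>"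
      by (rule norm_plane_wave_diff_le)
    also have "\<dots> \<le> 2 * pi * (norm (\<gamma> t - (\<gamma> t0 + (t - t0) *\<^sub>R \<gamma>' t0)) * normZ \<xi>)"
      by (intro mult_left_mono abs_dotZ_le) auto
    also have "\<dots> \<le> 2 * pi * (amax * h\<^sup>2 * normZ \<xi>)"
      using norm_curve_minus_tangent_le[OF assms]
      by (intro mult_left_mono mult_right_mono) (auto simp: normZ_def normsqZ_nonneg diff_diff_eq)
    finally show ?thesis .
  qed
  then have "norm (\<gamma>' t0) * cmod (plane_wave \<xi> (\<gamma> t) - ?L) \<le> smax * (2 * pi * (amax * h\<^sup>2 * normZ \<xi>))"
    using speed_le[OF t01(1)] smax_nonneg by (intro mult_mono) auto
  finally show ?thesis by (simp add: mult_ac)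
qed

text \<open>The Schur kernel of a piece \<open>[t\<^sub>0, t\<^sub>0 + h]\<close>: the error of replacing the curve by its tangent
  line, plus the bound for the linear phase, taken to be the trivial one below the frequency
  threshold \<open>T\<close>.\<close>
definition piece_kernel :: "real \<Rightarrow> real \<Rightarrow> real \<Rightarrow> int \<times> int \<Rightarrow> real" where
  "piece_kernel t0 h T \<xi> = h * (amax * h + 2 * pi * smax * amax * h\<^sup>2 * normZ \<xi>) +
     smax * (if \<bar>dotZ (\<gamma>' t0) \<xi>\<bar> \<le> T then h else 1 / (pi * \<bar>dotZ (\<gamma>' t0) \<xi>\<bar>))"

lemma piece_kernel_uminus: "piece_kernel t0 h T (- \<xi>) = piece_kernel t0 h T \<xi>"
  by (simp add: piece_kernel_def normZ_def normsqZ_uminus dotZ_uminus_right)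

lemma piece_kernel_nonneg: "0 \<le> h \<Longrightarrow> 0 \<le> piece_kernel t0 h T \<xi>"
  using smax_nonneg amax_nonneg by (simp add: piece_kernel_def normZ_def normsqZ_nonneg)

lemma norm_integral_plane_wave_curve_le:
  assumes "0 \<le> t0" "0 \<le> h" "t0 + h \<le> 1" "0 \<le> T"
  shows "cmod (integral {t0..t0+h} (\<lambda>t. plane_wave \<xi> (\<gamma> t) * of_real (norm (\<gamma>' t)))) \<le> piece_kernel t0 h T \<xi>"
proof -
  let ?P = "{t0..t0+h}"
  define F where "F t = plane_wave \<xi> (\<gamma> t) * of_real (norm (\<gamma>' t))" for t
  define L where "L t = plane_wave \<xi> (\<gamma> t0 + (t - t0) *\<^sub>R \<gamma>' t0)" for t
  have P01: "?P \<subseteq> {0..1}" and t01: "t0 \<in> {0..1}" using assms by auto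
  have contF: "continuous_on ?P F"
    unfolding F_def using continuous_on_subset[OF continuous_on_curve P01]
      continuous_on_subset[OF continuous_on_velocity P01]
    by (intro continuous_intros)
  have contL: "continuous_on ?P L"
    unfolding L_def by (intro continuous_intros)
  have "cmod (F t - of_real (norm (\<gamma>' t0)) * L t) \<le> amax * h + 2 * pi * smax * amax * h\<^sup>2 * normZ \<xi>"
    if "t \<in> ?P" for t
    unfolding F_def L_def using assms(1,3) that by (rule norm_weighted_plane_wave_minus_tangent_le)
  then have err: "cmod (integral ?P (\<lambda>t. F t - of_real (norm (\<gamma>' t0)) * L t)) \<le>
      (amax * h + 2 * pi * smax * amax * h\<^sup>2 * normZ \<xi>) * h"
    using assms contF contL by (intro integral_bound[of t0 "t0 + h", simplified]) (auto intro!: continuous_intros)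
  have main: "cmod (integral ?P L) \<le> (if \<bar>dotZ (\<gamma>' t0) \<xi>\<bar> \<le> T then h else 1 / (pi * \<bar>dotZ (\<gamma>' t0) \<xi>\<bar>))"
    using norm_integral_plane_wave_line_le[OF assms(2)] assms(4) unfolding L_def
    by (cases "\<bar>dotZ (\<gamma>' t0) \<xi>\<bar> \<le> T") auto
  have "integral ?P F = integral ?P (\<lambda>t. F t - of_real (norm (\<gamma>' t0)) * L t) + of_real (norm (\<gamma>' t0)) * integral ?P L"
    using integral_diff[of F ?P "\<lambda>t. of_real (norm (\<gamma>' t0)) * L t"] contF contL
    by (simp add: integrable_continuous_interval integrable_on_mult_right)
  then have "cmod (integral ?P F) \<le> cmod (integral ?P (\<lambda>t. F t - of_real (norm (\<gamma>' t0)) * L t)) +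
      cmod (of_real (norm (\<gamma>' t0)) * integral ?P L)"
    by (simp only: norm_triangle_ineq)
  also have "\<dots> = cmod (integral ?P (\<lambda>t. F t - of_real (norm (\<gamma>' t0)) * L t)) +
      norm (\<gamma>' t0) * cmod (integral ?P L)"
    by (simp add: norm_mult)
  also have "\<dots> \<le> (amax * h + 2 * pi * smax * amax * h\<^sup>2 * normZ \<xi>) * h +
      smax * (if \<bar>dotZ (\<gamma>' t0) \<xi>\<bar> \<le> T then h else 1 / (pi * \<bar>dotZ (\<gamma>' t0) \<xi>\<bar>))"
    using err main speed_le[OF t01] smax_nonneg by (intro add_mono mult_mono) auto
  also have "\<dots> = piece_kernel t0 h T \<xi>"
    by (simp add: piece_kernel_def mult.commute)
  finally show ?thesis by (simp add: F_def[abs_def])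
qed

lemma integral_eigfun_curve_piece_le:
  assumes "0 \<le> t0" "0 \<le> h" "t0 + h \<le> 1" "0 \<le> T"
  shows "integral {t0..t0+h} (\<lambda>t. (cmod (eigfun E a (\<gamma> t)))\<^sup>2 * norm (\<gamma>' t)) \<le>
    (\<Sum>\<xi>\<in>latt_circle E. \<Sum>\<eta>\<in>latt_circle E. cmod (a \<xi>) * cmod (a \<eta>) * piece_kernel t0 h T (\<xi> - \<eta>))"
proof -
  let ?S = "latt_circle E" and ?P = "{t0..t0+h}"
  let ?I = "integral ?P (\<lambda>t. (cmod (eigfun E a (\<gamma> t)))\<^sup>2 * norm (\<gamma>' t))"
  let ?J = "\<lambda>\<zeta>. integral ?P (\<lambda>t. plane_wave \<zeta> (\<gamma> t) * of_real (norm (\<gamma>' t)))"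
  have P01: "?P \<subseteq> {0..1}" using assms by auto
  note cont = continuous_on_subset[OF continuous_on_curve P01] continuous_on_subset[OF continuous_on_velocity P01]
  have "complex_of_real ?I = integral ?P (\<lambda>t. complex_of_real ((cmod (eigfun E a (\<gamma> t)))\<^sup>2 * norm (\<gamma>' t)))"
    using cont by (intro integral_unique[symmetric] has_integral_of_real integrable_integral
        integrable_continuous_interval continuous_intros)
  also have "\<dots> = integral ?P (\<lambda>t. \<Sum>\<xi>\<in>?S. \<Sum>\<eta>\<in>?S.
      a \<xi> * cnj (a \<eta>) * (plane_wave (\<xi> - \<eta>) (\<gamma> t) * of_real (norm (\<gamma>' t))))"
    unfolding of_real_mult norm_eigfun_sq sum_distrib_right by (simp add: mult.assoc)
  also have "\<dots> = (\<Sum>\<xi>\<in>?S. \<Sum>\<eta>\<in>?S. a \<xi> * cnj (a \<eta>) * ?J (\<xi> - \<eta>))"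
    using cont by (intro integral_double_sum_mult finite_latt_circle integrable_continuous_interval continuous_intros)
  finally have expand: "complex_of_real ?I = (\<Sum>\<xi>\<in>?S. \<Sum>\<eta>\<in>?S. a \<xi> * cnj (a \<eta>) * ?J (\<xi> - \<eta>))" .
  have "?I \<le> cmod (complex_of_real ?I)" by simp
  also have "\<dots> \<le> (\<Sum>\<xi>\<in>?S. \<Sum>\<eta>\<in>?S. cmod (a \<xi> * cnj (a \<eta>) * ?J (\<xi> - \<eta>)))"
    unfolding expand by (rule order_trans[OF norm_sum sum_mono[OF norm_sum]])
  also have "\<dots> \<le> (\<Sum>\<xi>\<in>?S. \<Sum>\<eta>\<in>?S. cmod (a \<xi>) * cmod (a \<eta>) * piece_kernel t0 h T (\<xi> - \<eta>))"
    using norm_integral_plane_wave_curve_le[OF assms]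
    by (intro sum_mono) (simp add: norm_mult mult_left_mono)
  finally show ?thesis .
qed

definition schur_const :: real where
  "schur_const = 18 * amax + 72 * pi * smax * amax + 18 * smax + 36 * smax / (pi * smin)"

lemma piece_kernel_le:
  assumes "0 \<le> h" "0 < T" "normZ \<xi> \<le> 2 * R"
  shows "piece_kernel t0 h T \<xi> \<le> h * (amax * h + 4 * pi * smax * amax * h\<^sup>2 * R) +
    smax * ((if \<bar>dotZ (\<gamma>' t0) \<xi>\<bar> \<le> T then h else 0) + 1 / (pi * T))"
proof -
  have "2 * pi * smax * amax * h\<^sup>2 * normZ \<xi> \<le> 2 * pi * smax * amax * h\<^sup>2 * (2 * R)"
    using assms(3) smax_nonneg amax_nonneg by (intro mult_left_mono) auto
  then have "h * (amax * h + 2 * pi * smax * amax * h\<^sup>2 * normZ \<xi>) \<le> h * (amax * h + 4 * pi * smax * amax * h\<^sup>2 * R)"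
    using assms(1) by (intro mult_left_mono) auto
  moreover have "(if \<bar>dotZ (\<gamma>' t0) \<xi>\<bar> \<le> T then h else 1 / (pi * \<bar>dotZ (\<gamma>' t0) \<xi>\<bar>)) \<le>
      (if \<bar>dotZ (\<gamma>' t0) \<xi>\<bar> \<le> T then h else 0) + 1 / (pi * T)"
    using assms(2) by (auto intro!: divide_left_mono mult_pos_pos)
  ultimately show ?thesis
    unfolding piece_kernel_def using smax_nonneg by (smt (verit) mult_left_mono)
qed

lemma schur_row_bound_le:
  assumes \<rho>: "1 \<le> \<rho>" and h: "0 < h" "h * \<rho>^6 \<le> 1" "1 \<le> 2 * \<rho>^6 * h"
    and N: "0 \<le> N" "N \<le> 18 * \<rho>^2" and card_near: "n \<le> 18" and smin_T: "smin * \<rho>^8 \<le> T"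
  shows "N * (h * (amax * h + 4 * pi * smax * amax * h\<^sup>2 * \<rho>^10)) + smax * (h * n + N / (pi * T))
    \<le> schur_const * h"
proof -
  define R A where "R = \<rho>^10" and "A = h * (amax * h + 4 * pi * smax * amax * h\<^sup>2 * R)"
  have \<rho>0: "0 < \<rho>" and R0: "0 < R" using \<rho> by (simp_all add: R_def)
  have "N * h \<le> 18 * \<rho>^2 * h" using N h(1) by (intro mult_right_mono) auto
  also have "\<dots> \<le> 18 * (\<rho>^6 * h)"
    using h(1) \<rho> by (simp add: mult_right_mono power_increasing)
  finally have Nh: "N * h \<le> 18" using h(2) by (simp add: mult.commute)
  have "N * (h\<^sup>2 * R) \<le> 18 * \<rho>^2 * (h\<^sup>2 * R)" using N R0 by (intro mult_right_mono) auto
  also have "\<dots> = 18 * h\<^sup>2 * (\<rho>^2 * R)" by (simp add: algebra_simps)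
  also have "\<dots> = 18 * (h * \<rho>^6)\<^sup>2"
    unfolding R_def by (simp add: power_mult_distrib flip: power_add power_mult)
  also have "\<dots> \<le> 18" using h by (simp add: power_le_one)
  finally have NhR: "N * (h\<^sup>2 * R) \<le> 18" .
  have "N / (pi * T) \<le> 18 * \<rho>^2 / (pi * (smin * \<rho>^8))"
    using N smin_T smin_pos \<rho>0 by (intro frac_le mult_left_mono mult_pos_pos) auto
  also have "\<dots> = 18 / (pi * smin * \<rho>^6)"
    using \<rho>0 smin_pos by (simp add: field_simps power_add[of \<rho> 2 6, simplified])
  also have "\<dots> \<le> 36 * h / (pi * smin)"
    using h smin_pos \<rho>0 by (simp add: field_simps)
  finally have NT: "N / (pi * T) \<le> 36 * h / (pi * smin)" .
  have "N * A = amax * (N * h) * h + 4 * pi * smax * amax * (N * (h\<^sup>2 * R)) * h"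
    by (simp add: A_def power2_eq_square algebra_simps)
  also have "\<dots> \<le> amax * 18 * h + 4 * pi * smax * amax * 18 * h"
    using Nh NhR h(1) amax_nonneg smax_nonneg by (intro add_mono mult_right_mono mult_left_mono) auto
  finally have "N * A \<le> (18 * amax + 72 * pi * smax * amax) * h" by (simp add: algebra_simps)
  moreover have "smax * (h * n + N / (pi * T)) \<le> smax * (h * 18 + 36 * h / (pi * smin))"
    using card_near NT smax_nonneg h(1) by (intro mult_left_mono add_mono) auto
  ultimately show ?thesis
    unfolding R_def[symmetric] A_def[symmetric] schur_const_def by (simp add: algebra_simps)
qed

text \<open>With \<open>\<rho> = R^(1/10)\<close>: separation \<open>\<rho>\<^sup>9\<close>, pieces of length \<open>h \<approx> \<rho>^-6\<close>, threshold \<open>\<bar>\<gamma>' t\<^sub>0\<bar> \<rho>\<^sup>8\<close>.\<close>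
lemma sum_piece_kernel_le:
  assumes \<rho>: "1 \<le> \<rho>" and sep: "latt_separated E (\<rho>^9)" and E: "(\<rho>^10)\<^sup>2 = real E"
    and t0: "t0 \<in> {0..1}" and h: "0 < h" "h * \<rho>^6 \<le> 1" "1 \<le> 2 * \<rho>^6 * h"
    and \<xi>: "\<xi> \<in> latt_circle E"
  shows "(\<Sum>\<eta>\<in>latt_circle E. piece_kernel t0 h (norm (\<gamma>' t0) * \<rho>^8) (\<xi> - \<eta>)) \<le> schur_const * h"
proof -
  let ?S = "latt_circle E"
  define R T where "R = \<rho>^10" and "T = norm (\<gamma>' t0) * \<rho>^8"
  define N where "N = real (card ?S)"
  define near where "near = {\<eta>\<in>?S. \<bar>dotZ (\<gamma>' t0) (\<xi> - \<eta>)\<bar> \<le> T}"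
  define A where "A = h * (amax * h + 4 * pi * smax * amax * h\<^sup>2 * R)"
  have \<rho>0: "0 < \<rho>" and R0: "0 < R" and D0: "0 < \<rho>^9" using \<rho> by (simp_all add: R_def)
  have smin_T: "smin * \<rho>^8 \<le> T"
    unfolding T_def using speed_ge[OF t0] \<rho>0 by (intro mult_right_mono) auto
  then have T0: "0 < T" using smin_pos \<rho>0 by (smt (verit) mult_pos_pos zero_less_power)
  have "N \<le> 16 * R\<^sup>2 / (\<rho>^9)\<^sup>2 + 2"
    unfolding N_def using card_latt_circle_le[OF sep D0 E[folded R_def] R0] .
  also have "16 * R\<^sup>2 / (\<rho>^9)\<^sup>2 = 16 * \<rho>^2"
    using \<rho>0 by (simp add: R_def field_simps flip: power_add power_mult)
  finally have N: "N \<le> 18 * \<rho>^2" using \<rho> by (smt (verit) one_le_power)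
  have "norm (\<gamma>' t0) \<noteq> 0" using speed_ge[OF t0] smin_pos by linarith
  then have "real (card near) \<le> 16 * \<rho>^8 * R / (\<rho>^9)\<^sup>2 + 2"
    unfolding near_def T_def using \<rho>0
    by (intro card_strip_scaled_le[OF _ sep D0 E[folded R_def] R0]) auto
  also have "16 * \<rho>^8 * R / (\<rho>^9)\<^sup>2 = 16"
    using \<rho>0 by (simp add: R_def field_simps flip: power_add power_mult)
  finally have card_near: "real (card near) \<le> 18" by simp
  have "(\<Sum>\<eta>\<in>?S. piece_kernel t0 h T (\<xi> - \<eta>)) \<le>
      (\<Sum>\<eta>\<in>?S. A + smax * ((if \<eta> \<in> near then h else 0) + 1 / (pi * T)))"
  proof (rule sum_mono)
    fix \<eta> assume \<eta>: "\<eta> \<in> ?S"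
    have "sqrt (real E) = R" using E R0 unfolding R_def by (intro real_sqrt_unique) auto
    then have "normZ (\<xi> - \<eta>) \<le> 2 * R" using normZ_diff_le[OF \<xi> \<eta>] by simp
    from piece_kernel_le[OF less_imp_le[OF h(1)] T0 this, of t0] \<eta>
    show "piece_kernel t0 h T (\<xi> - \<eta>) \<le> A + smax * ((if \<eta> \<in> near then h else 0) + 1 / (pi * T))"
      by (simp add: A_def near_def)
  qed
  also have "\<dots> = N * A + smax * (h * real (card near) + N / (pi * T))"
    using finite_latt_circle
    by (simp add: N_def near_def sum.distrib sum_distrib_left[symmetric] sum.If_cases Int_def field_simps)
  also have "\<dots> \<le> schur_const * h"
    using schur_row_bound_le[OF \<rho> h _ N card_near smin_T] by (simp add: A_def R_def N_def)
  finally show ?thesis by (simp add: T_def)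
qed

lemma integral_eigfun_curve_le:
  assumes \<rho>: "1 \<le> \<rho>" "latt_separated E (\<rho>^9)" "(\<rho>^10)\<^sup>2 = real E"
    and M: "0 < M" "\<rho>^6 \<le> real M" "real M \<le> 2 * \<rho>^6"
  shows "integral {0..1} (\<lambda>t. (cmod (eigfun E a (\<gamma> t)))\<^sup>2 * norm (\<gamma>' t)) \<le>
    schur_const * (\<Sum>\<xi>\<in>latt_circle E. (cmod (a \<xi>))\<^sup>2)"
proof -
  let ?S = "latt_circle E" and ?F = "\<lambda>t. (cmod (eigfun E a (\<gamma> t)))\<^sup>2 * norm (\<gamma>' t)"
  define h where "h = 1 / real M"
  have h: "0 < h" "h * \<rho>^6 \<le> 1" "1 \<le> 2 * \<rho>^6 * h"
    using M by (simp_all add: h_def field_simps)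
  have "integral {0..1} ?F = (\<Sum>j<M. integral {real j / M .. real j / M + h} ?F)"
    unfolding h_def using M(1) continuous_on_curve continuous_on_velocity
    by (intro integral_split_uniform continuous_intros)
  also have "\<dots> \<le> (\<Sum>j<M. schur_const * h * (\<Sum>\<xi>\<in>?S. (cmod (a \<xi>))\<^sup>2))"
  proof (rule sum_mono)
    fix j assume "j \<in> {..<M}"
    then have t0: "0 \<le> real j / M" "real j / M + h \<le> 1"
      using M(1) by (auto simp: h_def field_simps)
    let ?T = "norm (\<gamma>' (real j / M)) * \<rho>^8"
    have "integral {real j / M .. real j / M + h} ?F \<le>
        (\<Sum>\<xi>\<in>?S. \<Sum>\<eta>\<in>?S. cmod (a \<xi>) * cmod (a \<eta>) * piece_kernel (real j / M) h ?T (\<xi> - \<eta>))"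
      using t0 h(1) by (intro integral_eigfun_curve_piece_le) auto
    also have "\<dots> \<le> schur_const * h * (\<Sum>\<xi>\<in>?S. (cmod (a \<xi>))\<^sup>2)"
      using t0 h(1) by (intro schur_test finite_latt_circle piece_kernel_nonneg piece_kernel_uminus
          sum_piece_kernel_le[OF \<rho> _ h]) auto
    finally show "integral {real j / M .. real j / M + h} ?F \<le> schur_const * h * (\<Sum>\<xi>\<in>?S. (cmod (a \<xi>))\<^sup>2)" .
  qed
  also have "\<dots> = schur_const * (\<Sum>\<xi>\<in>?S. (cmod (a \<xi>))\<^sup>2)"
    using M(1) by (simp add: h_def)
  finally show ?thesis .
qed

lemma L2_curve_eigfun_le:
  assumes "0 < E" "latt_separated E (sqrt (real E) powr (9/10))"
  shows "L2_curve \<gamma> (eigfun E a) \<le> sqrt schur_const * L2_torus (eigfun E a)"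
proof -
  define \<rho> where "\<rho> = sqrt (real E) powr (1/10)"
  have \<rho>1: "1 \<le> \<rho>" using assms(1) by (simp add: \<rho>_def ge_one_powr_ge_zero)
  have \<rho>pow: "\<rho>^n = sqrt (real E) powr (real n / 10)" for n
    using assms(1) by (simp add: \<rho>_def powr_realpow[symmetric] powr_powr)
  have E: "(\<rho>^10)\<^sup>2 = real E" by (simp add: \<rho>pow)
  have sep: "latt_separated E (\<rho>^9)" using assms(2) by (simp add: \<rho>pow)
  define M where "M = nat \<lceil>\<rho>^6\<rceil>"
  have "1 \<le> \<rho>^6" using \<rho>1 by (simp add: one_le_power)
  then have M: "0 < M" "\<rho>^6 \<le> real M" "real M \<le> 2 * \<rho>^6"
    unfolding M_def by linarith+
  have "L2_curve \<gamma> (eigfun E a) = sqrt (integral {0..1} (\<lambda>t. (cmod (eigfun E a (\<gamma> t)))\<^sup>2 * norm (\<gamma>' t)))"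
    unfolding L2_curve_def by (intro arg_cong[where f=sqrt] integral_cong) (simp add: vector_derivative_curve)
  also have "\<dots> \<le> sqrt (schur_const * (\<Sum>\<xi>\<in>latt_circle E. (cmod (a \<xi>))\<^sup>2))"
    by (intro real_sqrt_le_mono integral_eigfun_curve_le[OF \<rho>1 sep E M])
  also have "\<dots> = sqrt schur_const * L2_torus (eigfun E a)"
    by (simp add: L2_torus_eigfun real_sqrt_mult)
  finally show ?thesis .
qed

end

lemma C2_curve_regular:
  assumes "C2_curve \<gamma>"
  obtains \<gamma>' \<gamma>'' smax smin amax where "regular_c2_curve \<gamma> \<gamma>' \<gamma>'' smax smin amax"
proof -
  obtain \<gamma>' \<gamma>'' where d: "\<And>t. t \<in> {0..1} \<Longrightarrow> (\<gamma> has_vector_derivative \<gamma>' t) (at t within {0..1})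
        \<and> (\<gamma>' has_vector_derivative \<gamma>'' t) (at t within {0..1}) \<and> \<gamma>' t \<noteq> 0"
    and cont2: "continuous_on {0..1} \<gamma>''"
    using assms unfolding C2_curve_def by blast
  have cont1: "continuous_on {0..1} \<gamma>'"
    using d has_vector_derivative_continuous continuous_on_eq_continuous_within by blast
  obtain tmax where tmax: "tmax \<in> {0..1}" "\<And>t. t \<in> {0..1} \<Longrightarrow> norm (\<gamma>' t) \<le> norm (\<gamma>' tmax)"
    using continuous_attains_sup[of "{0..1}" "\<lambda>t. norm (\<gamma>' t)"] continuous_on_norm[OF cont1] by auto
  obtain tmin where tmin: "tmin \<in> {0..1}" "\<And>t. t \<in> {0..1} \<Longrightarrow> norm (\<gamma>' tmin) \<le> norm (\<gamma>' t)"
    using continuous_attains_inf[of "{0..1}" "\<lambda>t. norm (\<gamma>' t)"] continuous_on_norm[OF cont1] by auto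
  obtain tacc where tacc: "tacc \<in> {0..1}" "\<And>t. t \<in> {0..1} \<Longrightarrow> norm (\<gamma>'' t) \<le> norm (\<gamma>'' tacc)"
    using continuous_attains_sup[of "{0..1}" "\<lambda>t. norm (\<gamma>'' t)"] continuous_on_norm[OF cont2] by auto
  show ?thesis
    by (rule that[of \<gamma>' \<gamma>'' "norm (\<gamma>' tmax)" "norm (\<gamma>' tmin)" "norm (\<gamma>'' tacc)"], unfold_locales)
      (use d tmax tmin tacc in auto)
qed

lemma latt_separated_of_dist_gt_powr:
  assumes "0 < E" "\<epsilon> \<le> 1/10"
    and dist: "\<forall>x\<in>latt_circle E. \<forall>y\<in>latt_circle E. x \<noteq> y \<longrightarrow>
      sqrt (real_of_int (normsqZ (x - y))) > sqrt (real E) powr (1 - \<epsilon>)"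
  shows "latt_separated E (sqrt (real E) powr (9/10))"
  unfolding latt_separated_def
proof (intro ballI impI)
  fix x y assume xy: "x \<in> latt_circle E" "y \<in> latt_circle E" "x \<noteq> y"
  have "sqrt (real E) powr (9/10) \<le> sqrt (real E) powr (1 - \<epsilon>)"
    using assms(1,2) by (intro powr_mono) auto
  also have "\<dots> < sqrt (of_int (normsqZ (x - y)))"
    using dist xy by blast
  finally have "(sqrt (real E) powr (9/10))\<^sup>2 < (sqrt (of_int (normsqZ (x - y))))\<^sup>2"
    by (intro power_strict_mono) auto
  then show "(sqrt (real E) powr (9/10))\<^sup>2 < real_of_int (normsqZ (x - y))"
    by (simp add: normsqZ_nonneg)
qed

theorem lemma12p2:
  shows "\<exists>\<epsilon>0::real. \<epsilon>0 > 0 \<and>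
    (\<forall>\<gamma>. C2_curve \<gamma> \<longrightarrow>
      (\<exists>C::real. \<forall>\<epsilon>::real. \<forall>E::nat.
         0 < \<epsilon> \<longrightarrow> \<epsilon> \<le> \<epsilon>0 \<longrightarrow> 0 < E \<longrightarrow>
         (\<forall>x\<in>latt_circle E. \<forall>y\<in>latt_circle E. x \<noteq> y \<longrightarrow>
             sqrt (real_of_int (normsqZ (x - y))) > sqrt (real E) powr (1 - \<epsilon>)) \<longrightarrow>
         (\<forall>a. L2_curve \<gamma> (eigfun E a) \<le> C * L2_torus (eigfun E a))))"
proof (rule exI[of _ "1/10"], intro conjI allI impI)
  fix \<gamma> assume "C2_curve \<gamma>"
  then obtain \<gamma>' \<gamma>'' smax smin amax where "regular_c2_curve \<gamma> \<gamma>' \<gamma>'' smax smin amax"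
    by (rule C2_curve_regular)
  then interpret regular_c2_curve \<gamma> \<gamma>' \<gamma>'' smax smin amax .
  show "\<exists>C. \<forall>\<epsilon> E. 0 < \<epsilon> \<longrightarrow> \<epsilon> \<le> 1/10 \<longrightarrow> 0 < E \<longrightarrow>
      (\<forall>x\<in>latt_circle E. \<forall>y\<in>latt_circle E. x \<noteq> y \<longrightarrow>
         sqrt (real_of_int (normsqZ (x - y))) > sqrt (real E) powr (1 - \<epsilon>)) \<longrightarrow>
      (\<forall>a. L2_curve \<gamma> (eigfun E a) \<le> C * L2_torus (eigfun E a))"
    using L2_curve_eigfun_le latt_separated_of_dist_gt_powr by blast
qed simp

end
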